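(* Let $m\geq 2$ and $n\geq 3$ be integers and let $M$ be the adjacency matrix of the oriented Dutch windmill graph $D^m_n$. Then the Drazin inverse of $M$ is $$M^D=\frac{1}{m}M^{n-1}.$$ Moreover, the only nonzero entries of $M^D$ are equal to $\frac1m$, and they occur precisely at the positions $(i,j)$ satisfying one of the following: (1) $i=1$ and $j=(k-1)(n-1)+n$ for some $k\in\{1,\ldots,m\}$; (2) $i=(k-1)(n-1)+2$ and $j=1$ for some $k\in\{1,\ldots,m\}$; (3) $i=(k-1)(n-1)+\ell$ and $j=i-1$ for some $k\in\{1,\ldots,m\}$ and $\ell\in\{3,\ldots,n\}$; (4) $i=(k-1)(n-1)+\ell$ and $j=(r-1)(n-1)+(\ell-1)$ for some distinct $k,r\in\{1,\ldots,m\}$ and some $\ell\in\{3,\ldots,n\}$. These positions correspond exactly to the ordered pairs of vertices $(i,j)$ such that there is a walk of length $n-1$ from $i$ to $j$ in $D^m_n$.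
   Context: For integers $m\geq 1$, $n\geq 3$, the oriented Dutch windmill graph $D^m_n$ is the directed graph with vertex set $V=\{1,2,\ldots,m(n-1)+1\}$ whose directed edges $(a,b)$ are exactly: $(1,(k-1)(n-1)+2)$ for $k\in\{1,\ldots,m\}$; $((k-1)(n-1)+i,(k-1)(n-1)+i+1)$ for $k\in\{1,\ldots,m\}$ and $i\in\{2,\ldots,n-1\}$; and $((k-1)(n-1)+n,1)$ for $k\in\{1,\ldots,m\}$. (Thus it consists of $m$ directed $n$-cycles sharing the vertex $1$.) Its adjacency matrix $M=(a_{ij})$ is the real $(m(n-1)+1)\times(m(n-1)+1)$ matrix with $a_{ij}=1$ if $(i,j)$ is an edge and $a_{ij}=0$ otherwise. A walk is a sequence of vertices $\langle v_1,\ldots,v_r\rangle$ in which each $(v_t,v_{t+1})$ is an edge; its length is $r-1$. The Drazin inverse of a square matrix $A$ is the unique matrix $X$ with $A^{k+1}X=A^k$, $XAX=X$, $AX=XA$ for some nonnegative integer $k$; the least such $k$ is the Drazin index $\operatorname{ind}(A)$. *)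

theory Defs
  imports "Jordan_Normal_Form.Matrix"
begin

text \<open>Oriented Dutch windmill graph D^m_n on vertices 1 .. m(n-1)+1 (1-based, as in the paper).\<close>

definition dw_nverts :: "nat \<Rightarrow> nat \<Rightarrow> nat" where
  "dw_nverts m n = m * (n - 1) + 1"

definition dw_edge :: "nat \<Rightarrow> nat \<Rightarrow> nat \<Rightarrow> nat \<Rightarrow> bool" where
  "dw_edge m n a b \<longleftrightarrow>
     (\<exists>k\<in>{1..m}. a = 1 \<and> b = (k - 1) * (n - 1) + 2)
   \<or> (\<exists>k\<in>{1..m}. \<exists>i\<in>{2..n - 1}. a = (k - 1) * (n - 1) + i \<and> b = (k - 1) * (n - 1) + i + 1)
   \<or> (\<exists>k\<in>{1..m}. a = (k - 1) * (n - 1) + n \<and> b = 1)"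

definition dw_adj :: "nat \<Rightarrow> nat \<Rightarrow> real mat" where
  "dw_adj m n = mat (dw_nverts m n) (dw_nverts m n)
      (\<lambda>(i, j). if dw_edge m n (i + 1) (j + 1) then 1 else 0)"

definition dw_walk :: "nat \<Rightarrow> nat \<Rightarrow> nat \<Rightarrow> nat \<Rightarrow> nat \<Rightarrow> bool" where
  "dw_walk m n L u v \<longleftrightarrow>
     (\<exists>vs :: nat list. length vs = L + 1 \<and> vs ! 0 = u \<and> vs ! L = v \<and>
        (\<forall>t < L. dw_edge m n (vs ! t) (vs ! (t + 1))))"

definition is_drazin_inverse :: "'a::comm_ring_1 mat \<Rightarrow> 'a mat \<Rightarrow> bool" where
  "is_drazin_inverse A X \<longleftrightarrow> X \<in> carrier_mat (dim_row A) (dim_row A) \<and>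
     (\<exists>k::nat. A ^\<^sub>m (k + 1) * X = A ^\<^sub>m k \<and> X * A * X = X \<and> A * X = X * A)"

definition drazin_inverse :: "'a::comm_ring_1 mat \<Rightarrow> 'a mat" where
  "drazin_inverse A = (THE X. is_drazin_inverse A X)"

end

theory Submission
  imports Defs
begin

text \<open>
  Number the vertices from 0, the hub being 0. Every other vertex has a phase in 1..n-1, its
  distance from the hub along its blade, and every edge raises the phase by one modulo n (the hub
  having phase 0); only the hub has several out-neighbours. Hence a walk of length n-1 ends one
  phase behind its start, on an arbitrary blade once it has passed the hub, which determines
  M^(n-1); a walk of length n returns to its phase, and there are m closed walks of length n at
  the hub. Multiplying the two gives M^(2n-1) = m M^(n-1). For any square matrix A with
  A^(2k+1) = c A^k and c nonzero, A^k / c satisfies the Drazin equations with index k+1, and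
  Drazin inverses are unique in every monoid. Since powers of an adjacency matrix have
  nonnegative entries, their supports consist of the pairs joined by walks of the corresponding
  length.
\<close>

section \<open>Drazin inverses\<close>

lemma (in monoid) nat_pow_commute:
  assumes "a \<in> carrier G" "x \<in> carrier G" "x \<otimes> a = a \<otimes> x"
  shows "x \<otimes> a [^] (k::nat) = a [^] k \<otimes> x"
proof (induction k)
  case (Suc k)
  have "x \<otimes> a [^] Suc k = (x \<otimes> a [^] k) \<otimes> a"
    using assms by (simp add: m_assoc)
  also have "\<dots> = a [^] Suc k \<otimes> x"
    using assms by (simp add: Suc m_assoc)
  finally show ?case .
qed (use assms in simp)

lemma (in monoid) idempotent_nat_pow:
  assumes "e \<in> carrier G" "e \<otimes> e = e"
  shows "e [^] Suc (k::nat) = e"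
  using assms by (induction k) (simp_all add: m_assoc)

lemma (in monoid) pow_Suc_mult_eq_mono:
  assumes "a \<in> carrier G" "z \<in> carrier G" "a [^] Suc k \<otimes> z = a [^] k" "k \<le> K"
  shows "a [^] Suc K \<otimes> z = a [^] (K::nat)"
proof -
  have "a [^] Suc K = a [^] (K - k) \<otimes> a [^] Suc k"
    using nat_pow_mult[OF assms(1), of "K - k" "Suc k"] assms(4) by (simp del: nat_pow_Suc)
  then have "a [^] Suc K \<otimes> z = a [^] (K - k) \<otimes> a [^] k"
    using assms(1-3) by (simp add: m_assoc del: nat_pow_Suc)
  then show ?thesis
    using nat_pow_mult[OF assms(1), of "K - k" k] assms(4) by simp
qed

text \<open>
  Since x a is idempotent, x = x^(K+1) a^K = a^K x^(K+1), and a^K = a^(K+1) y = y a^(K+1).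
\<close>

lemma (in monoid) drazin_inverse_absorb:
  assumes a: "a \<in> carrier G" and x: "x \<in> carrier G" and y: "y \<in> carrier G"
    and x1: "a [^] Suc K \<otimes> x = a [^] (K::nat)" and x2: "x \<otimes> a \<otimes> x = x" and x3: "a \<otimes> x = x \<otimes> a"
    and y1: "a [^] Suc K \<otimes> y = a [^] K" and y3: "a \<otimes> y = y \<otimes> a"
  shows "x = x \<otimes> a \<otimes> y" and "x = y \<otimes> a \<otimes> x"
proof -
  have "(x \<otimes> a) \<otimes> (x \<otimes> a) = x \<otimes> a"
    using a x x2 by (simp flip: m_assoc)
  then have idem: "(x \<otimes> a) [^] Suc K = x \<otimes> a"
    using a x by (simp only: idempotent_nat_pow m_closed)
  have xa_pow: "(x \<otimes> a) [^] Suc K = x [^] Suc K \<otimes> a [^] Suc K"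
    using a x x3 by (simp only: pow_mult_distrib)
  have ax_pow: "(x \<otimes> a) [^] Suc K = a [^] Suc K \<otimes> x [^] Suc K"
    using a x x3 by (simp only: pow_mult_distrib flip: x3)
  have "x = (x \<otimes> a) [^] Suc K \<otimes> x"
    using idem x2 by simp
  also have "\<dots> = x [^] Suc K \<otimes> a [^] K"
    using a x by (simp only: xa_pow m_assoc x1 nat_pow_closed)
  also have "\<dots> = (x \<otimes> a) [^] Suc K \<otimes> y"
    using a x y by (simp only: xa_pow m_assoc y1 nat_pow_closed)
  finally show "x = x \<otimes> a \<otimes> y"
    by (simp only: idem)
  have "x = x \<otimes> (a \<otimes> x)"
    using a x x2 by (simp add: m_assoc)
  also have "\<dots> = x \<otimes> (x \<otimes> a) [^] Suc K"
    by (simp only: idem x3)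
  also have "\<dots> = (x \<otimes> a [^] Suc K) \<otimes> x [^] Suc K"
    using a x by (simp only: ax_pow m_assoc nat_pow_closed)
  also have "x \<otimes> a [^] Suc K = a [^] K"
    using a x by (simp only: nat_pow_commute x3 x1)
  also have "a [^] K = y \<otimes> a [^] Suc K"
    using a y by (simp only: nat_pow_commute y3 y1)
  also have "y \<otimes> a [^] Suc K \<otimes> x [^] Suc K = y \<otimes> (x \<otimes> a) [^] Suc K"
    using a x y by (simp only: ax_pow m_assoc nat_pow_closed)
  finally show "x = y \<otimes> a \<otimes> x"
    using a x y by (simp only: idem m_assoc x3)
qed

lemma (in monoid) drazin_inverse_unique:
  assumes a: "a \<in> carrier G" and x: "x \<in> carrier G" and y: "y \<in> carrier G"
    and x1: "a [^] Suc k \<otimes> x = a [^] (k::nat)" and x2: "x \<otimes> a \<otimes> x = x" and x3: "a \<otimes> x = x \<otimes> a"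
    and y1: "a [^] Suc j \<otimes> y = a [^] (j::nat)" and y2: "y \<otimes> a \<otimes> y = y" and y3: "a \<otimes> y = y \<otimes> a"
  shows "x = y"
proof -
  have xK: "a [^] Suc (k + j) \<otimes> x = a [^] (k + j)" and yK: "a [^] Suc (k + j) \<otimes> y = a [^] (k + j)"
    using pow_Suc_mult_eq_mono[OF a x x1] pow_Suc_mult_eq_mono[OF a y y1] by simp_all
  have "x = x \<otimes> a \<otimes> y"
    by (rule drazin_inverse_absorb(1)[OF a x y xK x2 x3 yK y3])
  also have "\<dots> = y"
    by (rule drazin_inverse_absorb(2)[OF a y x yK y2 y3 xK x3, symmetric])
  finally show ?thesis .
qed

lemma pow_mat_add:
  fixes A :: "'a::semiring_1 mat"
  assumes "A \<in> carrier_mat N N"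
  shows "A ^\<^sub>m (i + j) = A ^\<^sub>m i * A ^\<^sub>m j"
proof -
  interpret semiring "ring_mat TYPE('a) N ()"
    by (rule semiring_mat)
  show ?thesis
    using nat_pow_mult[of A i j] assms by (simp add: ring_mat_simps flip: pow_mat_ring_pow[OF assms])
qed

lemma drazin_inverse_mat_unique:
  fixes A X Y :: "'a::semiring_1 mat"
  assumes A: "A \<in> carrier_mat N N" and "X \<in> carrier_mat N N" "Y \<in> carrier_mat N N"
    and "A ^\<^sub>m Suc k * X = A ^\<^sub>m k" "X * A * X = X" "A * X = X * A"
    and "A ^\<^sub>m Suc j * Y = A ^\<^sub>m j" "Y * A * Y = Y" "A * Y = Y * A"
  shows "X = Y"
proof -
  interpret semiring "ring_mat TYPE('a) N ()"
    by (rule semiring_mat)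
  show ?thesis
    using assms drazin_inverse_unique[of A X Y k j]
    by (simp add: ring_mat_simps flip: pow_mat_ring_pow[OF A])
qed

lemma drazin_inverse_eqI:
  fixes A X :: "'a::comm_ring_1 mat"
  assumes A: "A \<in> carrier_mat N N" and X: "is_drazin_inverse A X"
  shows "drazin_inverse A = X"
  unfolding drazin_inverse_def
proof (rule the_equality[where P = "is_drazin_inverse A", OF X])
  fix Y
  assume "is_drazin_inverse A Y"
  with A X show "Y = X"
    unfolding is_drazin_inverse_def by (auto intro: drazin_inverse_mat_unique[OF A])
qed

lemma is_drazin_inverse_smult_pow:
  fixes A :: "'a::field mat"
  assumes A: "A \<in> carrier_mat N N" and c: "c \<noteq> 0" and pow: "A ^\<^sub>m (2 * k + 1) = c \<cdot>\<^sub>m A ^\<^sub>m k"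
  shows "is_drazin_inverse A ((1 / c) \<cdot>\<^sub>m A ^\<^sub>m k)"
proof -
  let ?X = "(1 / c) \<cdot>\<^sub>m A ^\<^sub>m k"
  have Ak: "A ^\<^sub>m i \<in> carrier_mat N N" for i
    using A by simp
  have pow_mult: "A ^\<^sub>m i * ?X = (1 / c) \<cdot>\<^sub>m A ^\<^sub>m (i + k)" for i
    by (simp add: mult_smult_distrib[OF Ak Ak] pow_mat_add[OF A])
  have cancel: "(1 / c) \<cdot>\<^sub>m (c \<cdot>\<^sub>m B) = B" for B :: "'a mat"
    using c by (intro eq_matI) auto
  have "A ^\<^sub>m (Suc (k + 1)) * ?X = (1 / c) \<cdot>\<^sub>m (A ^\<^sub>m (2 * k + 1) * A)"
    unfolding pow_mult by (simp add: mult_2 add.assoc)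
  also have "\<dots> = (1 / c) \<cdot>\<^sub>m ((c \<cdot>\<^sub>m A ^\<^sub>m k) * A)"
    by (simp only: pow)
  also have "\<dots> = A ^\<^sub>m (k + 1)"
    by (simp add: mult_smult_assoc_mat[OF Ak A] cancel)
  finally have index: "A ^\<^sub>m (Suc (k + 1)) * ?X = A ^\<^sub>m (k + 1)" .
  have XA: "?X * A = (1 / c) \<cdot>\<^sub>m A ^\<^sub>m (k + 1)"
    using A by (simp add: mult_smult_assoc_mat[OF Ak A])
  have AX: "A * ?X = (1 / c) \<cdot>\<^sub>m A ^\<^sub>m (k + 1)"
    using pow_mult[of 1] A by (simp add: add.commute)
  have "?X * A * ?X = (1 / c) \<cdot>\<^sub>m (A ^\<^sub>m (k + 1) * ?X)"
    unfolding XA by (rule mult_smult_assoc_mat[OF Ak smult_carrier_mat[OF Ak]])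
  also have "A ^\<^sub>m (k + 1) * ?X = (1 / c) \<cdot>\<^sub>m A ^\<^sub>m (2 * k + 1)"
    unfolding pow_mult by (simp add: mult_2)
  finally have XAX: "?X * A * ?X = ?X"
    by (simp only: pow cancel)
  show ?thesis
    unfolding is_drazin_inverse_def using A index XA AX XAX by (auto intro!: exI[of _ "k + 1"])
qed

section \<open>Walks and powers of adjacency matrices\<close>

lemma index_mult_mat_sum:
  assumes "B \<in> carrier_mat N N" "C \<in> carrier_mat N N" "a < N" "b < N"
  shows "(B * C) $$ (a, b) = (\<Sum>x<N. B $$ (a, x) * C $$ (x, b))"
  using assms by (auto simp: scalar_prod_def lessThan_atLeast0 intro!: sum.cong)

definition adj_mat :: "nat \<Rightarrow> (nat \<Rightarrow> nat \<Rightarrow> bool) \<Rightarrow> 'a::{zero,one} mat" where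
  "adj_mat N E = mat N N (\<lambda>(i, j). if E (i + 1) (j + 1) then 1 else 0)"

definition walk :: "(nat \<Rightarrow> nat \<Rightarrow> bool) \<Rightarrow> nat \<Rightarrow> nat \<Rightarrow> nat \<Rightarrow> bool" where
  "walk E L u v \<longleftrightarrow> (\<exists>vs. length vs = L + 1 \<and> vs ! 0 = u \<and> vs ! L = v \<and>
     (\<forall>t < L. E (vs ! t) (vs ! (t + 1))))"

lemma walk_0 [simp]: "walk E 0 u v \<longleftrightarrow> u = v"
  unfolding walk_def by (auto intro: exI[of _ "[u]"])

lemma walk_Suc: "walk E (Suc L) u v \<longleftrightarrow> (\<exists>w. walk E L u w \<and> E w v)"
proof
  assume "walk E (Suc L) u v"
  then obtain vs where vs: "length vs = Suc L + 1" "vs ! 0 = u" "vs ! Suc L = v"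
    "\<forall>t < Suc L. E (vs ! t) (vs ! (t + 1))"
    unfolding walk_def by blast
  have "walk E L u (vs ! L)"
    unfolding walk_def using vs by (intro exI[of _ "take (L + 1) vs"]) auto
  moreover have "E (vs ! L) v"
    using vs(3,4) by auto
  ultimately show "\<exists>w. walk E L u w \<and> E w v"
    by blast
next
  assume "\<exists>w. walk E L u w \<and> E w v"
  then obtain w vs where vs: "length vs = L + 1" "vs ! 0 = u" "vs ! L = w"
    "\<forall>t < L. E (vs ! t) (vs ! (t + 1))" and "E w v"
    unfolding walk_def by blast
  then have "\<forall>t < Suc L. E ((vs @ [v]) ! t) ((vs @ [v]) ! (t + 1))"
    by (auto simp: nth_append less_Suc_eq)
  then show "walk E (Suc L) u v"
    unfolding walk_def using vs by (intro exI[of _ "vs @ [v]"]) (simp add: nth_append)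
qed

lemma adj_mat_carrier [simp]: "adj_mat N E \<in> carrier_mat N N"
  and dim_row_adj_mat [simp]: "dim_row (adj_mat N E) = N"
  and dim_col_adj_mat [simp]: "dim_col (adj_mat N E) = N"
  unfolding adj_mat_def by simp_all

lemma adj_mat_pow_nonneg:
  assumes "a < N" "b < N"
  shows "(adj_mat N E ^\<^sub>m L :: 'a::linordered_semidom mat) $$ (a, b) \<ge> 0"
  using assms(2)
proof (induction L arbitrary: b)
  case (Suc L)
  have "(adj_mat N E ^\<^sub>m Suc L :: 'a mat) $$ (a, b) =
      (\<Sum>x<N. (adj_mat N E ^\<^sub>m L) $$ (a, x) * adj_mat N E $$ (x, b))"
    unfolding pow_mat.simps(2) using assms(1) Suc.prems by (intro index_mult_mat_sum) simp_all
  also have "\<dots> \<ge> 0"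
    using Suc by (intro sum_nonneg) (simp add: adj_mat_def)
  finally show ?case .
qed (use assms in simp)

lemma adj_mat_pow_nonzero_iff_walk:
  assumes E: "\<And>u v. E u v \<Longrightarrow> u \<in> {1..N}" and "a < N" "b < N"
  shows "(adj_mat N E ^\<^sub>m L :: 'a::linordered_semidom mat) $$ (a, b) \<noteq> 0 \<longleftrightarrow> walk E L (a + 1) (b + 1)"
  using assms(3)
proof (induction L arbitrary: b)
  case (Suc L)
  let ?A = "adj_mat N E :: 'a mat"
  let ?t = "\<lambda>x. (?A ^\<^sub>m L) $$ (a, x) * ?A $$ (x, b)"
  have "(?A ^\<^sub>m Suc L) $$ (a, b) = (\<Sum>x<N. ?t x)"
    unfolding pow_mat.simps(2) using assms(2) Suc.prems by (intro index_mult_mat_sum) simp_all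
  moreover have "(\<Sum>x<N. ?t x) = 0 \<longleftrightarrow> (\<forall>x<N. ?t x = 0)"
    using adj_mat_pow_nonneg[OF assms(2)] Suc.prems
    by (subst sum_nonneg_eq_0_iff) (auto simp: adj_mat_def)
  moreover have "?t x \<noteq> 0 \<longleftrightarrow> walk E L (a + 1) (x + 1) \<and> E (x + 1) (b + 1)" if "x < N" for x
    using Suc.IH[OF that] that Suc.prems by (simp add: adj_mat_def)
  moreover have "(\<exists>x<N. walk E L (a + 1) (x + 1) \<and> E (x + 1) (b + 1)) \<longleftrightarrow>
      (\<exists>w. walk E L (a + 1) w \<and> E w (b + 1))"
  proof
    assume "\<exists>w. walk E L (a + 1) w \<and> E w (b + 1)"
    then obtain w where "walk E L (a + 1) w" "E w (b + 1)"
      by blast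
    moreover have "w - 1 < N" "w - 1 + 1 = w"
      using E[OF \<open>E w (b + 1)\<close>] by auto
    ultimately show "\<exists>x<N. walk E L (a + 1) (x + 1) \<and> E (x + 1) (b + 1)"
      by metis
  qed blast
  ultimately show ?case
    by (simp add: walk_Suc) blast
qed (use assms in simp)

section \<open>The windmill graph\<close>

text \<open>
  A matrix index a other than the hub 0 lies on the blade (directed cycle) dw_blade n a, at
  distance dw_phase n a from the hub along it.
\<close>

definition dw_phase :: "nat \<Rightarrow> nat \<Rightarrow> nat" where
  "dw_phase n a = (if a = 0 then 0 else (a - 1) mod (n - 1) + 1)"

definition dw_blade :: "nat \<Rightarrow> nat \<Rightarrow> nat" where
  "dw_blade n a = (a - 1) div (n - 1)"

lemma dw_phase_blade_eq:
  assumes "n \<ge> 2" "1 \<le> q" "q < n"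
  shows "dw_phase n (k * (n - 1) + q) = q" and "dw_blade n (k * (n - 1) + q) = k"
proof -
  obtain r where "q = Suc r" "r < n - 1"
    using assms by (cases q) auto
  then show "dw_phase n (k * (n - 1) + q) = q" "dw_blade n (k * (n - 1) + q) = k"
    unfolding dw_phase_def dw_blade_def by simp_all
qed

lemma dw_phase_0 [simp]: "dw_phase n 0 = 0"
  and dw_phase_eq_0_iff [simp]: "dw_phase n a = 0 \<longleftrightarrow> a = 0"
  by (simp_all add: dw_phase_def)

lemma dw_phase_pos: "a \<noteq> 0 \<Longrightarrow> 0 < dw_phase n a"
  by (simp add: dw_phase_def)

lemma dw_phase_less:
  assumes "n \<ge> 2"
  shows "dw_phase n a < n"
proof (cases "a = 0")
  case False
  have "(a - 1) mod (n - 1) < n - 1"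
    using assms by simp
  then show ?thesis
    unfolding dw_phase_def if_not_P[OF False] by linarith
qed (use assms in simp)

lemma dw_vertex_decomp:
  assumes "n \<ge> 2" "a \<noteq> 0"
  shows "a = dw_blade n a * (n - 1) + dw_phase n a"
  using assms div_mult_mod_eq[of "a - 1" "n - 1"] by (simp add: dw_phase_def dw_blade_def)

lemma dw_blade_less:
  assumes "a \<noteq> 0" "a < dw_nverts m n"
  shows "dw_blade n a < m"
proof -
  have "a - 1 < m * (n - 1)"
    using assms by (simp add: dw_nverts_def)
  then show ?thesis
    by (simp add: dw_blade_def less_mult_imp_div_less)
qed

lemma dw_phase_blade_minus_one:
  assumes "n \<ge> 2" "dw_phase n a \<ge> 2"
  shows "dw_phase n (a - 1) = dw_phase n a - 1" and "dw_blade n (a - 1) = dw_blade n a"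
    and "a - 1 \<noteq> 0"
proof -
  have "a \<noteq> 0"
    using assms by (cases "a = 0") simp_all
  with assms have "a - 1 = dw_blade n a * (n - 1) + (dw_phase n a - 1)"
    using dw_vertex_decomp[of n a] by linarith
  then show "dw_phase n (a - 1) = dw_phase n a - 1" "dw_blade n (a - 1) = dw_blade n a" "a - 1 \<noteq> 0"
    using dw_phase_blade_eq[OF assms(1), of "dw_phase n a - 1"] dw_phase_less[OF assms(1), of a] assms(2)
    by simp_all
qed

lemma sum_dw_vertices:
  fixes g :: "nat \<Rightarrow> 'a::comm_monoid_add"
  assumes "n \<ge> 1"
  shows "(\<Sum>a<dw_nverts m n. g a) = g 0 + (\<Sum>k<m. \<Sum>q\<in>{1..<n}. g (k * (n - 1) + q))"
proof (induction m)
  case (Suc m)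
  have "(\<Sum>a<dw_nverts (Suc m) n. g a) =
      (\<Sum>a<dw_nverts m n. g a) + (\<Sum>a\<in>{dw_nverts m n..<dw_nverts (Suc m) n}. g a)"
    unfolding lessThan_atLeast0
    by (rule sum.atLeastLessThan_concat[symmetric]) (simp_all add: dw_nverts_def)
  also have "(\<Sum>a\<in>{dw_nverts m n..<dw_nverts (Suc m) n}. g a) = (\<Sum>q\<in>{1..<n}. g (m * (n - 1) + q))"
    using sum.atLeastLessThan_shift_bounds[of g 1 "m * (n - 1)" n] assms
    by (simp add: dw_nverts_def add.commute comp_def)
  finally show ?case
    using Suc.IH by (simp add: add.assoc)
qed (simp add: dw_nverts_def)

definition dw_pred :: "nat \<Rightarrow> nat \<Rightarrow> nat" where
  "dw_pred n b = (if dw_phase n b = 1 then 0 else b - 1)"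

lemma dw_edgeD:
  assumes n: "n \<ge> 3" and "dw_edge m n (a + 1) (b + 1)"
  shows "(b \<noteq> 0 \<and> a = dw_pred n b) \<or> (b = 0 \<and> a \<noteq> 0 \<and> dw_phase n a = n - 1)"
proof -
  from assms(2) consider (hub_out) k where "k \<in> {1..m}" "a = 0" "b = (k - 1) * (n - 1) + 1"
    | (blade) k i where "k \<in> {1..m}" "i \<in> {2..n - 1}" "a = (k - 1) * (n - 1) + (i - 1)"
        "b = (k - 1) * (n - 1) + i"
    | (hub_in) k where "k \<in> {1..m}" "a = (k - 1) * (n - 1) + (n - 1)" "b = 0"
    unfolding dw_edge_def using n by fastforce
  then show ?thesis
  proof cases
    case hub_out
    then show ?thesis
      using dw_phase_blade_eq(1)[of n 1 "k - 1"] n by (simp add: dw_pred_def)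
  next
    case blade
    then have "dw_phase n b = i"
      using dw_phase_blade_eq(1)[of n i "k - 1"] n by auto
    then show ?thesis
      using blade by (auto simp: dw_pred_def)
  next
    case hub_in
    then show ?thesis
      using dw_phase_blade_eq(1)[of n "n - 1" "k - 1"] n by simp
  qed
qed

lemma dw_edgeI:
  assumes n: "n \<ge> 3" and a: "a < dw_nverts m n" and b: "b < dw_nverts m n"
    and edge: "(b \<noteq> 0 \<and> a = dw_pred n b) \<or> (b = 0 \<and> a \<noteq> 0 \<and> dw_phase n a = n - 1)"
  shows "dw_edge m n (a + 1) (b + 1)"
proof (cases "b = 0")
  case False
  let ?k = "dw_blade n b + 1"
  have k: "?k \<in> {1..m}"
    using dw_blade_less[OF False b] by simp
  have b_eq: "b + 1 = (?k - 1) * (n - 1) + dw_phase n b + 1"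
    using dw_vertex_decomp[of n b] n False by simp
  show ?thesis
  proof (cases "dw_phase n b = 1")
    case True
    then have "a + 1 = 1" "b + 1 = (?k - 1) * (n - 1) + 2"
      using edge False b_eq by (auto simp: dw_pred_def)
    then show ?thesis
      using k unfolding dw_edge_def by blast
  next
    case phase: False
    have "dw_phase n b \<ge> 2"
      using phase False by (cases "dw_phase n b") auto
    then have "dw_phase n b \<in> {2..n - 1}" "a + 1 = (?k - 1) * (n - 1) + dw_phase n b"
      using edge False phase b_eq dw_phase_less[of n b] n by (auto simp: dw_pred_def)
    then show ?thesis
      using k b_eq unfolding dw_edge_def by blast
  qed
next
  case True
  let ?k = "dw_blade n a + 1"
  have "a \<noteq> 0" "dw_phase n a = n - 1"
    using edge True by auto
  then have "?k \<in> {1..m}" "a + 1 = (?k - 1) * (n - 1) + n"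
    using dw_blade_less[OF _ a] dw_vertex_decomp[of n a] n by auto
  moreover have "b + 1 = 1"
    using True by simp
  ultimately show ?thesis
    unfolding dw_edge_def by blast
qed

lemma dw_edge_iff:
  assumes "n \<ge> 3" "a < dw_nverts m n" "b < dw_nverts m n"
  shows "dw_edge m n (a + 1) (b + 1) \<longleftrightarrow>
    (b \<noteq> 0 \<and> a = dw_pred n b) \<or> (b = 0 \<and> a \<noteq> 0 \<and> dw_phase n a = n - 1)"
  using dw_edgeD[OF assms(1)] dw_edgeI[OF assms] by blast

lemma dw_adj_eq_adj_mat: "dw_adj m n = adj_mat (dw_nverts m n) (dw_edge m n)"
  unfolding dw_adj_def adj_mat_def ..

lemma dw_walk_eq_walk: "dw_walk m n = walk (dw_edge m n)"
  unfolding dw_walk_def walk_def by (intro ext) simp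

lemma dw_edge_source:
  assumes "dw_edge m n u v" "n \<ge> 1"
  shows "u \<in> {1..dw_nverts m n}"
proof -
  have blade_end: "(k - 1) * (n - 1) + n \<le> dw_nverts m n" if "k \<in> {1..m}" for k
  proof -
    have "(k - 1) * (n - 1) + n = k * (n - 1) + 1"
      using that assms(2) by (cases k) auto
    also have "\<dots> \<le> dw_nverts m n"
      using that by (simp add: dw_nverts_def)
    finally show ?thesis .
  qed
  from assms(1) show ?thesis
    unfolding dw_edge_def
  proof (elim disjE bexE conjE)
    fix k i
    assume "k \<in> {1..m}" "i \<in> {2..n - 1}" "u = (k - 1) * (n - 1) + i"
    then show ?thesis
      using blade_end[of k] by auto
  next
    fix k
    assume "k \<in> {1..m}" "u = (k - 1) * (n - 1) + n"
    then show ?thesis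
      using blade_end[of k] assms(2) by auto
  qed (simp add: dw_nverts_def)
qed

lemma index_dw_adj:
  assumes "n \<ge> 3" "a < dw_nverts m n" "b < dw_nverts m n"
  shows "dw_adj m n $$ (a, b) =
    (if (b \<noteq> 0 \<and> a = dw_pred n b) \<or> (b = 0 \<and> a \<noteq> 0 \<and> dw_phase n a = n - 1) then 1 else 0)"
  using assms dw_edge_iff[OF assms] by (simp add: dw_adj_def)

lemma dw_adj_carrier [simp]: "dw_adj m n \<in> carrier_mat (dw_nverts m n) (dw_nverts m n)"
  and dim_row_dw_adj [simp]: "dim_row (dw_adj m n) = dw_nverts m n"
  and dim_col_dw_adj [simp]: "dim_col (dw_adj m n) = dw_nverts m n"
  by (simp_all add: dw_adj_eq_adj_mat)

lemma sum_mult_dw_adj: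
  fixes f :: "nat \<Rightarrow> real"
  assumes n: "n \<ge> 3" and b: "b < dw_nverts m n"
  shows "(\<Sum>x<dw_nverts m n. f x * dw_adj m n $$ (x, b)) =
    (if b = 0 then (\<Sum>k<m. f (k * (n - 1) + (n - 1))) else f (dw_pred n b))"
proof (cases "b = 0")
  case False
  have "dw_pred n b < dw_nverts m n"
    using b unfolding dw_pred_def by (simp add: less_imp_diff_less)
  have "(\<Sum>x<dw_nverts m n. f x * dw_adj m n $$ (x, b)) =
      (\<Sum>x<dw_nverts m n. if x = dw_pred n b then f x else 0)"
    using False index_dw_adj[OF n _ b] by (intro sum.cong) auto
  with \<open>dw_pred n b < dw_nverts m n\<close> False show ?thesis
    by simp
next
  case True
  let ?g = "\<lambda>x. if x \<noteq> 0 \<and> dw_phase n x = n - 1 then f x else 0"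
  have "(\<Sum>x<dw_nverts m n. f x * dw_adj m n $$ (x, b)) = (\<Sum>x<dw_nverts m n. ?g x)"
    using True index_dw_adj[OF n _ b] by (intro sum.cong) auto
  also have "\<dots> = ?g 0 + (\<Sum>k<m. \<Sum>q\<in>{1..<n}. ?g (k * (n - 1) + q))"
    using n by (intro sum_dw_vertices) simp
  also have "\<dots> = (\<Sum>k<m. \<Sum>q\<in>{1..<n}. ?g (k * (n - 1) + q))"
    by simp
  also have "\<dots> = (\<Sum>k<m. f (k * (n - 1) + (n - 1)))"
  proof (rule sum.cong[OF refl])
    fix k
    have "(\<Sum>q\<in>{1..<n}. ?g (k * (n - 1) + q)) =
        (\<Sum>q\<in>{1..<n}. if q = n - 1 then f (k * (n - 1) + q) else 0)"
      using n dw_phase_blade_eq(1)[of n _ k] by (intro sum.cong refl) auto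
    also have "\<dots> = f (k * (n - 1) + (n - 1))"
      using n by simp
    finally show "(\<Sum>q\<in>{1..<n}. ?g (k * (n - 1) + q)) = f (k * (n - 1) + (n - 1))" .
  qed
  finally show ?thesis
    using True by simp
qed

section \<open>Powers of the adjacency matrix\<close>

lemma mat_mult_dw_adj:
  fixes F G :: "nat \<Rightarrow> nat \<Rightarrow> real"
  assumes n: "n \<ge> 3"
    and G: "\<And>a b. a < dw_nverts m n \<Longrightarrow> b < dw_nverts m n \<Longrightarrow>
      G a b = (if b = 0 then \<Sum>k<m. F a (k * (n - 1) + (n - 1)) else F a (dw_pred n b))"
  shows "mat (dw_nverts m n) (dw_nverts m n) (\<lambda>(a, b). F a b) * dw_adj m n =
    mat (dw_nverts m n) (dw_nverts m n) (\<lambda>(a, b). G a b)"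
proof (rule eq_matI)
  fix a b
  assume "a < dim_row (mat (dw_nverts m n) (dw_nverts m n) (\<lambda>(a, b). G a b))"
    and "b < dim_col (mat (dw_nverts m n) (dw_nverts m n) (\<lambda>(a, b). G a b))"
  then have a: "a < dw_nverts m n" and b: "b < dw_nverts m n"
    by simp_all
  have "(mat (dw_nverts m n) (dw_nverts m n) (\<lambda>(a, b). F a b) * dw_adj m n) $$ (a, b) =
      (\<Sum>x<dw_nverts m n. F a x * dw_adj m n $$ (x, b))"
    using a b by (subst index_mult_mat_sum[of _ "dw_nverts m n"]) auto
  then show "(mat (dw_nverts m n) (dw_nverts m n) (\<lambda>(a, b). F a b) * dw_adj m n) $$ (a, b) =
      mat (dw_nverts m n) (dw_nverts m n) (\<lambda>(a, b). G a b) $$ (a, b)"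
    using a b sum_mult_dw_adj[OF n b, of "F a"] G[OF a b] by simp
qed simp_all

text \<open>
  Entries of M^L for L < n: a walk from a that does not reach the hub stays on the blade of a
  (on any blade if a is the hub); one that passes the hub ends at phase dw_phase n a + L - n on
  any blade.
\<close>

definition dw_short_walks :: "nat \<Rightarrow> nat \<Rightarrow> nat \<Rightarrow> nat \<Rightarrow> real" where
  "dw_short_walks n L a b =
    (if dw_phase n a + L < n
     then (if dw_phase n b = dw_phase n a + L \<and> (a = 0 \<or> dw_blade n b = dw_blade n a) then 1 else 0)
     else (if dw_phase n b + n = dw_phase n a + L then 1 else 0))"

lemma dw_short_walks_0:
  assumes "n \<ge> 2"
  shows "dw_short_walks n 0 a b = (if a = b then 1 else 0)"
proof (cases "a = 0 \<or> b = 0")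
  case True
  then show ?thesis
    using assms dw_phase_less[OF assms] by (auto simp: dw_short_walks_def)
next
  case False
  then have "a = b \<longleftrightarrow> dw_phase n b = dw_phase n a \<and> dw_blade n b = dw_blade n a"
    using dw_vertex_decomp[OF assms] by metis
  then show ?thesis
    using False dw_phase_less[OF assms] by (auto simp: dw_short_walks_def)
qed

lemma dw_short_walks_Suc_pred:
  assumes n: "n \<ge> 2" and b: "b \<noteq> 0" and L: "Suc L \<le> n - 1"
  shows "dw_short_walks n L a (dw_pred n b) = dw_short_walks n (Suc L) a b"
proof (cases "dw_phase n b = 1")
  case True
  then show ?thesis
    using L dw_phase_less[OF n, of a] by (auto simp: dw_short_walks_def dw_pred_def)
next
  case False
  then have phase: "dw_phase n b \<ge> 2"
    using b by (cases "dw_phase n b") auto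
  have "dw_phase n b < n"
    by (rule dw_phase_less[OF n])
  then show ?thesis
    unfolding dw_short_walks_def dw_pred_def if_not_P[OF False]
      dw_phase_blade_minus_one(1,2)[OF n phase]
    using phase L by auto
qed

lemma dw_short_walks_Suc_hub:
  assumes n: "n \<ge> 2" and a: "a < dw_nverts m n" and L: "Suc L \<le> n - 1"
  shows "(\<Sum>k<m. dw_short_walks n L a (k * (n - 1) + (n - 1))) = dw_short_walks n (Suc L) a 0"
proof -
  have last: "dw_phase n (k * (n - 1) + (n - 1)) = n - 1" "dw_blade n (k * (n - 1) + (n - 1)) = k" for k
    using dw_phase_blade_eq[OF n, of "n - 1" k] n by auto
  show ?thesis
  proof (cases "dw_phase n a + L = n - 1")
    case True
    then have "a \<noteq> 0"
      using L by (cases "a = 0") auto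
    have "(\<Sum>k<m. dw_short_walks n L a (k * (n - 1) + (n - 1))) = (\<Sum>k<m. if k = dw_blade n a then 1 else 0)"
      using True \<open>a \<noteq> 0\<close> last n by (intro sum.cong) (auto simp: dw_short_walks_def)
    also have "\<dots> = 1"
      using dw_blade_less[OF \<open>a \<noteq> 0\<close> a] by simp
    finally show ?thesis
      using True n by (simp add: dw_short_walks_def)
  next
    case False
    have "(\<Sum>k<m. dw_short_walks n L a (k * (n - 1) + (n - 1))) = 0"
      using False last n L dw_phase_less[OF n, of a] by (intro sum.neutral) (auto simp: dw_short_walks_def)
    then show ?thesis
      using False n L dw_phase_less[OF n, of a] by (auto simp: dw_short_walks_def)
  qed
qed

lemma dw_adj_pow_short:
  assumes n: "n \<ge> 3" and L: "L \<le> n - 1"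
  shows "dw_adj m n ^\<^sub>m L = mat (dw_nverts m n) (dw_nverts m n) (\<lambda>(a, b). dw_short_walks n L a b)"
  using L
proof (induction L)
  case 0
  show ?case
    using n by (intro eq_matI) (auto simp: dw_short_walks_0)
next
  case (Suc L)
  have "dw_adj m n ^\<^sub>m Suc L =
      mat (dw_nverts m n) (dw_nverts m n) (\<lambda>(a, b). dw_short_walks n L a b) * dw_adj m n"
    using Suc by simp
  also have "\<dots> = mat (dw_nverts m n) (dw_nverts m n) (\<lambda>(a, b). dw_short_walks n (Suc L) a b)"
  proof (rule mat_mult_dw_adj[OF n])
    fix a b
    assume "a < dw_nverts m n"
    then show "dw_short_walks n (Suc L) a b =
        (if b = 0 then \<Sum>k<m. dw_short_walks n L a (k * (n - 1) + (n - 1))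
         else dw_short_walks n L a (dw_pred n b))"
      using n dw_short_walks_Suc_hub[of n a m L] dw_short_walks_Suc_pred[of n b L] Suc.prems by simp
  qed
  finally show ?case .
qed

definition dw_phase_behind :: "nat \<Rightarrow> nat \<Rightarrow> nat \<Rightarrow> real" where
  "dw_phase_behind n a b =
    (if a = 0 then (if dw_phase n b = n - 1 then 1 else 0)
     else (if dw_phase n b + 1 = dw_phase n a then 1 else 0))"

lemma dw_adj_pow_n_minus_1:
  assumes n: "n \<ge> 3"
  shows "dw_adj m n ^\<^sub>m (n - 1) = mat (dw_nverts m n) (dw_nverts m n) (\<lambda>(a, b). dw_phase_behind n a b)"
proof -
  have "dw_short_walks n (n - 1) a b = dw_phase_behind n a b" for a b
    using n dw_phase_pos[of a n] by (cases "a = 0") (auto simp: dw_short_walks_def dw_phase_behind_def)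
  then show ?thesis
    using dw_adj_pow_short[OF n order.refl] by simp
qed

definition dw_full_turns :: "nat \<Rightarrow> nat \<Rightarrow> nat \<Rightarrow> nat \<Rightarrow> real" where
  "dw_full_turns m n a b =
    (if b = 0 then (if a = 0 then real m else 0)
     else (if a \<noteq> 0 \<and> dw_phase n a = dw_phase n b then 1 else 0))"

lemma dw_adj_pow_n:
  assumes n: "n \<ge> 3"
  shows "dw_adj m n ^\<^sub>m n = mat (dw_nverts m n) (dw_nverts m n) (\<lambda>(a, b). dw_full_turns m n a b)"
proof -
  have n2: "n \<ge> 2"
    using n by simp
  have "dw_adj m n ^\<^sub>m n = dw_adj m n ^\<^sub>m (n - 1) * dw_adj m n"
    using n by (cases n) simp_all
  also have "\<dots> = mat (dw_nverts m n) (dw_nverts m n) (\<lambda>(a, b). dw_full_turns m n a b)"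
    unfolding dw_adj_pow_n_minus_1[OF n]
  proof (rule mat_mult_dw_adj[OF n])
    fix a b
    have last: "dw_phase n (k * (n - 1) + (n - 1)) = n - 1" for k
      using dw_phase_blade_eq(1)[OF n2, of "n - 1" k] n by simp
    have "dw_phase n a < n"
      by (rule dw_phase_less[OF n2])
    then have hub: "(\<Sum>k<m. dw_phase_behind n a (k * (n - 1) + (n - 1))) = dw_full_turns m n a 0"
      using last dw_phase_pos[of a n] by (cases "a = 0") (simp_all add: dw_phase_behind_def dw_full_turns_def)
    have blade: "dw_phase_behind n a (dw_pred n b) = dw_full_turns m n a b" if "b \<noteq> 0"
    proof (cases "dw_phase n b = 1")
      case False
      with that have phase: "dw_phase n b \<ge> 2"
        by (cases "dw_phase n b") auto
      have "dw_phase n b < n"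
        by (rule dw_phase_less[OF n2])
      then show ?thesis
        unfolding dw_pred_def dw_phase_behind_def dw_full_turns_def if_not_P[OF False]
          dw_phase_blade_minus_one(1,3)[OF n2 phase]
        using that phase by auto
    qed (use that n in \<open>auto simp: dw_pred_def dw_phase_behind_def dw_full_turns_def\<close>)
    show "dw_full_turns m n a b = (if b = 0 then \<Sum>k<m. dw_phase_behind n a (k * (n - 1) + (n - 1))
        else dw_phase_behind n a (dw_pred n b))"
      using hub blade by simp
  qed
  finally show ?thesis .
qed

lemma sum_dw_phase_behind_mult_full_turns:
  assumes n: "n \<ge> 3"
  shows "(\<Sum>x<dw_nverts m n. dw_phase_behind n a x * dw_full_turns m n x b) = real m * dw_phase_behind n a b"
proof -
  have n2: "n \<ge> 2"
    using n by simp
  have blade: "dw_phase n (k * (n - 1) + q) = q" "k * (n - 1) + q \<noteq> 0" if "q \<in> {1..<n}" for k q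
    using dw_phase_blade_eq(1)[OF n2, of q k] that by auto
  let ?t = "\<lambda>x. dw_phase_behind n a x * dw_full_turns m n x b"
  have "(\<Sum>x<dw_nverts m n. ?t x) = ?t 0 + (\<Sum>k<m. \<Sum>q\<in>{1..<n}. ?t (k * (n - 1) + q))"
    using n by (intro sum_dw_vertices) simp
  also have "\<dots> = real m * dw_phase_behind n a b"
  proof (cases "b = 0")
    case True
    have "(\<Sum>k<m. \<Sum>q\<in>{1..<n}. ?t (k * (n - 1) + q)) = 0"
      using blade True by (intro sum.neutral ballI) (simp add: dw_full_turns_def)
    then show ?thesis
      using True by (simp add: dw_full_turns_def)
  next
    case False
    have "(\<Sum>q\<in>{1..<n}. ?t (k * (n - 1) + q)) = dw_phase_behind n a b" for k
    proof -
      have "(\<Sum>q\<in>{1..<n}. ?t (k * (n - 1) + q)) =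
          (\<Sum>q\<in>{1..<n}. if q = dw_phase n b then dw_phase_behind n a b else 0)"
        using blade False by (intro sum.cong refl) (auto simp: dw_full_turns_def dw_phase_behind_def)
      also have "\<dots> = dw_phase_behind n a b"
        using False dw_phase_pos[of b n] dw_phase_less[OF n2, of b] by simp
      finally show ?thesis .
    qed
    then show ?thesis
      using False by (simp add: dw_full_turns_def)
  qed
  finally show ?thesis .
qed

lemma dw_phase_behind_mult_full_turns:
  assumes n: "n \<ge> 3"
  shows "mat (dw_nverts m n) (dw_nverts m n) (\<lambda>(a, b). dw_phase_behind n a b) *
      mat (dw_nverts m n) (dw_nverts m n) (\<lambda>(a, b). dw_full_turns m n a b) =
    real m \<cdot>\<^sub>m mat (dw_nverts m n) (dw_nverts m n) (\<lambda>(a, b). dw_phase_behind n a b)"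
    (is "?P * ?Q = _")
proof (rule eq_matI)
  fix a b
  assume "a < dim_row (real m \<cdot>\<^sub>m ?P)" "b < dim_col (real m \<cdot>\<^sub>m ?P)"
  then have a: "a < dw_nverts m n" and b: "b < dw_nverts m n"
    by simp_all
  have "(?P * ?Q) $$ (a, b) = (\<Sum>x<dw_nverts m n. dw_phase_behind n a x * dw_full_turns m n x b)"
    using a b by (subst index_mult_mat_sum[of _ "dw_nverts m n"]) auto
  then show "(?P * ?Q) $$ (a, b) = (real m \<cdot>\<^sub>m ?P) $$ (a, b)"
    using a b sum_dw_phase_behind_mult_full_turns[OF n] by simp
qed simp_all

lemma dw_adj_pow_odd:
  assumes n: "n \<ge> 3"
  shows "dw_adj m n ^\<^sub>m (2 * (n - 1) + 1) = real m \<cdot>\<^sub>m dw_adj m n ^\<^sub>m (n - 1)"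
proof -
  have "2 * (n - 1) + 1 = (n - 1) + n"
    using n by simp
  then show ?thesis
    using dw_phase_behind_mult_full_turns[OF n]
    by (simp only: pow_mat_add[OF dw_adj_carrier] dw_adj_pow_n_minus_1[OF n] dw_adj_pow_n[OF n])
qed

section \<open>The Drazin inverse of the windmill\<close>

text \<open>
  Unlike the other functions on the windmill, this one takes the 1-based vertex names of the
  theorem rather than matrix indices.
\<close>

definition dw_drazin_support :: "nat \<Rightarrow> nat \<Rightarrow> nat \<Rightarrow> nat \<Rightarrow> bool" where
  "dw_drazin_support m n i j \<longleftrightarrow>
     (i = 1 \<and> (\<exists>k\<in>{1..m}. j = (k - 1) * (n - 1) + n))
   \<or> (\<exists>k\<in>{1..m}. i = (k - 1) * (n - 1) + 2 \<and> j = 1)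
   \<or> (\<exists>k\<in>{1..m}. \<exists>l\<in>{3..n}. i = (k - 1) * (n - 1) + l \<and> j = i - 1)
   \<or> (\<exists>k\<in>{1..m}. \<exists>r\<in>{1..m}. \<exists>l\<in>{3..n}. k \<noteq> r \<and>
         i = (k - 1) * (n - 1) + l \<and> j = (r - 1) * (n - 1) + (l - 1))"

lemma dw_drazin_support_blade:
  assumes n: "n \<ge> 3" and a: "a \<noteq> 0" "a < dw_nverts m n" and b: "b \<noteq> 0" "b < dw_nverts m n"
    and phase: "dw_phase n b + 1 = dw_phase n a"
  shows "dw_drazin_support m n (a + 1) (b + 1)"
proof -
  have n2: "n \<ge> 2"
    using n by simp
  let ?l = "dw_phase n a + 1"
  have l: "?l \<in> {3..n}"
    using phase dw_phase_pos[OF b(1), of n] dw_phase_less[OF n2, of a] by auto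
  have k: "dw_blade n a + 1 \<in> {1..m}" "dw_blade n b + 1 \<in> {1..m}"
    using dw_blade_less[OF a] dw_blade_less[OF b] by simp_all
  have i: "a + 1 = (dw_blade n a + 1 - 1) * (n - 1) + ?l"
    using dw_vertex_decomp[OF n2 a(1)] by simp
  have j: "b + 1 = (dw_blade n b + 1 - 1) * (n - 1) + (?l - 1)"
    using dw_vertex_decomp[OF n2 b(1)] phase by simp
  show ?thesis
  proof (cases "dw_blade n b = dw_blade n a")
    case True
    then have "b + 1 = a + 1 - 1"
      using i j by simp
    then show ?thesis
      using k l i unfolding dw_drazin_support_def by blast
  next
    case False
    then show ?thesis
      using k l i j unfolding dw_drazin_support_def by (intro disjI2) (metis add_right_cancel)
  qed
qed

lemma dw_drazin_support_if_phase_behind: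
  assumes n: "n \<ge> 3" and a: "a < dw_nverts m n" and b: "b < dw_nverts m n"
    and behind: "dw_phase_behind n a b \<noteq> 0"
  shows "dw_drazin_support m n (a + 1) (b + 1)"
proof -
  have n2: "n \<ge> 2"
    using n by simp
  consider (hub) "a = 0" "dw_phase n b = n - 1"
    | (to_hub) "a \<noteq> 0" "b = 0" "dw_phase n a = 1"
    | (blade) "a \<noteq> 0" "b \<noteq> 0" "dw_phase n b + 1 = dw_phase n a"
    using behind by (cases "a = 0"; cases "b = 0") (auto simp: dw_phase_behind_def split: if_splits)
  then show ?thesis
  proof cases
    case hub
    then have b0: "b \<noteq> 0"
      using n by (cases "b = 0") simp_all
    then have "b + 1 = (dw_blade n b + 1 - 1) * (n - 1) + n" "dw_blade n b + 1 \<in> {1..m}"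
      using n hub dw_vertex_decomp[OF n2 b0] dw_blade_less[OF b0 b] by simp_all
    moreover have "a + 1 = 1"
      using hub by simp
    ultimately show ?thesis
      unfolding dw_drazin_support_def by blast
  next
    case to_hub
    then have "a + 1 = (dw_blade n a + 1 - 1) * (n - 1) + 2" "dw_blade n a + 1 \<in> {1..m}"
      using dw_vertex_decomp[OF n2 to_hub(1)] dw_blade_less[OF to_hub(1) a] by simp_all
    moreover have "b + 1 = 1"
      using to_hub by simp
    ultimately show ?thesis
      unfolding dw_drazin_support_def by blast
  next
    case blade
    then show ?thesis
      using dw_drazin_support_blade[OF n _ a _ b] by simp
  qed
qed

lemma dw_phase_behind_if_drazin_support:
  assumes n: "n \<ge> 3" and support: "dw_drazin_support m n i j"
  shows "dw_phase_behind n (i - 1) (j - 1) = 1"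
proof -
  have phase: "dw_phase n (k * (n - 1) + q) = q" "k * (n - 1) + q \<noteq> 0" if "1 \<le> q" "q < n" for k q
    using dw_phase_blade_eq(1)[of n q k] n that by auto
  from support show ?thesis
    unfolding dw_drazin_support_def
  proof (elim disjE conjE bexE)
    fix k
    assume "i = 1" "j = (k - 1) * (n - 1) + n"
    then show ?thesis
      using phase[of "n - 1" "k - 1"] n by (simp add: dw_phase_behind_def algebra_simps)
  next
    fix k
    assume "i = (k - 1) * (n - 1) + 2" "j = 1"
    then show ?thesis
      using phase[of 1 "k - 1"] n by (simp add: dw_phase_behind_def)
  next
    fix k l
    assume l: "l \<in> {3..n}" and "i = (k - 1) * (n - 1) + l" "j = i - 1"
    then have "i - 1 = (k - 1) * (n - 1) + (l - 1)" "j - 1 = (k - 1) * (n - 1) + (l - 2)"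
      by (simp_all add: numeral_2_eq_2)
    moreover have "dw_phase n ((k - 1) * (n - 1) + (l - 1)) = l - 1"
      by (rule phase(1)) (use l in auto)
    moreover have "dw_phase n ((k - 1) * (n - 1) + (l - 2)) = l - 2"
      by (rule phase(1)) (use l in auto)
    moreover have "l - 2 + 1 = l - 1" "l - 1 \<noteq> 0"
      using l by auto
    ultimately show ?thesis
      by (simp add: dw_phase_behind_def)
  next
    fix k r l
    assume l: "l \<in> {3..n}" and "i = (k - 1) * (n - 1) + l" "j = (r - 1) * (n - 1) + (l - 1)"
    then have "i - 1 = (k - 1) * (n - 1) + (l - 1)" "j - 1 = (r - 1) * (n - 1) + (l - 2)"
      by (simp_all add: numeral_2_eq_2)
    moreover have "dw_phase n ((k - 1) * (n - 1) + (l - 1)) = l - 1"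
      by (rule phase(1)) (use l in auto)
    moreover have "dw_phase n ((r - 1) * (n - 1) + (l - 2)) = l - 2"
      by (rule phase(1)) (use l in auto)
    moreover have "l - 2 + 1 = l - 1" "l - 1 \<noteq> 0"
      using l by auto
    ultimately show ?thesis
      by (simp add: dw_phase_behind_def)
  qed
qed

lemma dw_phase_behind_ne_0_iff:
  assumes "n \<ge> 3" "a < dw_nverts m n" "b < dw_nverts m n"
  shows "dw_phase_behind n a b \<noteq> 0 \<longleftrightarrow> dw_drazin_support m n (a + 1) (b + 1)"
  using dw_drazin_support_if_phase_behind[OF assms] dw_phase_behind_if_drazin_support[OF assms(1)]
  by fastforce

lemma dw_walk_iff_phase_behind:
  assumes n: "n \<ge> 3" and a: "a < dw_nverts m n" and b: "b < dw_nverts m n"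
  shows "dw_walk m n (n - 1) (a + 1) (b + 1) \<longleftrightarrow> dw_phase_behind n a b \<noteq> 0"
proof -
  have "u \<in> {1..dw_nverts m n}" if "dw_edge m n u v" for u v
    using dw_edge_source[OF that] n by simp
  then have "(adj_mat (dw_nverts m n) (dw_edge m n) ^\<^sub>m (n - 1) :: real mat) $$ (a, b) \<noteq> 0 \<longleftrightarrow>
      walk (dw_edge m n) (n - 1) (a + 1) (b + 1)"
    by (intro adj_mat_pow_nonzero_iff_walk[OF _ a b]) blast
  then show ?thesis
    unfolding dw_walk_eq_walk dw_adj_eq_adj_mat[symmetric] dw_adj_pow_n_minus_1[OF n]
    using a b by simp
qed

lemma drazin_inverse_dw_adj:
  assumes "m \<ge> 1" "n \<ge> 3"
  shows "drazin_inverse (dw_adj m n) = (1 / real m) \<cdot>\<^sub>m dw_adj m n ^\<^sub>m (n - 1)"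
  using assms
  by (intro drazin_inverse_eqI[OF dw_adj_carrier] is_drazin_inverse_smult_pow[OF dw_adj_carrier]
      dw_adj_pow_odd) simp_all

lemma index_drazin_inverse_dw_adj:
  assumes "m \<ge> 1" "n \<ge> 3" "a < dw_nverts m n" "b < dw_nverts m n"
  shows "drazin_inverse (dw_adj m n) $$ (a, b) = dw_phase_behind n a b / real m"
  unfolding drazin_inverse_dw_adj[OF assms(1,2)] dw_adj_pow_n_minus_1[OF assms(2)]
  using assms(3,4) by simp

theorem theorem3p3:
  fixes m n :: nat
  assumes "m \<ge> 2" and "n \<ge> 3"
  defines "N \<equiv> dw_nverts m n"
  defines "M \<equiv> dw_adj m n"
  shows "drazin_inverse M = (1 / real m) \<cdot>\<^sub>m (M ^\<^sub>m (n - 1)) \<and>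
    (\<forall>i\<in>{1..N}. \<forall>j\<in>{1..N}.
           (drazin_inverse M $$ (i - 1, j - 1) \<noteq> 0 \<longrightarrow> drazin_inverse M $$ (i - 1, j - 1) = 1 / real m)
         \<and> (drazin_inverse M $$ (i - 1, j - 1) \<noteq> 0 \<longleftrightarrow>
              ((i = 1 \<and> (\<exists>k\<in>{1..m}. j = (k - 1) * (n - 1) + n))
             \<or> (\<exists>k\<in>{1..m}. i = (k - 1) * (n - 1) + 2 \<and> j = 1)
             \<or> (\<exists>k\<in>{1..m}. \<exists>l\<in>{3..n}. i = (k - 1) * (n - 1) + l \<and> j = i - 1)
             \<or> (\<exists>k\<in>{1..m}. \<exists>r\<in>{1..m}. \<exists>l\<in>{3..n}. k \<noteq> r \<and>
                   i = (k - 1) * (n - 1) + l \<and> j = (r - 1) * (n - 1) + (l - 1))))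
         \<and> (drazin_inverse M $$ (i - 1, j - 1) \<noteq> 0 \<longleftrightarrow> dw_walk m n (n - 1) i j))"
proof (unfold dw_drazin_support_def[symmetric], intro conjI ballI)
  have m: "m \<ge> 1" and n: "n \<ge> 3"
    using assms by simp_all
  then show "drazin_inverse M = (1 / real m) \<cdot>\<^sub>m M ^\<^sub>m (n - 1)"
    unfolding M_def by (rule drazin_inverse_dw_adj)
  fix i j
  assume "i \<in> {1..N}" "j \<in> {1..N}"
  then have ab: "i - 1 < dw_nverts m n" "j - 1 < dw_nverts m n" and ij: "i - 1 + 1 = i" "j - 1 + 1 = j"
    unfolding N_def by auto
  have entry: "drazin_inverse M $$ (i - 1, j - 1) = dw_phase_behind n (i - 1) (j - 1) / real m"
    unfolding M_def by (rule index_drazin_inverse_dw_adj[OF m n ab])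
  then show "drazin_inverse M $$ (i - 1, j - 1) \<noteq> 0 \<longrightarrow> drazin_inverse M $$ (i - 1, j - 1) = 1 / real m"
    by (simp add: dw_phase_behind_def)
  have nonzero: "drazin_inverse M $$ (i - 1, j - 1) \<noteq> 0 \<longleftrightarrow> dw_phase_behind n (i - 1) (j - 1) \<noteq> 0"
    using entry m by simp
  show "drazin_inverse M $$ (i - 1, j - 1) \<noteq> 0 \<longleftrightarrow> dw_drazin_support m n i j"
    using dw_phase_behind_ne_0_iff[OF n ab] unfolding nonzero ij .
  show "drazin_inverse M $$ (i - 1, j - 1) \<noteq> 0 \<longleftrightarrow> dw_walk m n (n - 1) i j"
    using dw_walk_iff_phase_behind[OF n ab] unfolding nonzero ij by simp
qed

end
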